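(* Let $m,n$ be nonzero integers with $|m|<|n|$. Let $u_1,u_2,u_3$ be vertices of type $a$ of $\Lambda_{m,n}$ with $u_1<u_2<u_3$. For $i,j\in\{1,2,3\}$ let $\Lambda_{ij}=\mathrm{lk}_\Lambda(u_i)\cap\mathrm{lk}_\Lambda(u_j)$, and assume $\Lambda_{13}\neq\emptyset$. Then $\Lambda_{13}\subsetneq\Lambda_{12}$ and $\Lambda_{13}\subseteq \Lambda_{23}$. Moreover, if $m$ does not divide $n$ then $\Lambda_{13}\subsetneq \Lambda_{23}$, and if $m$ divides $n$ then $\Lambda_{13}=\Lambda_{23}$.
   Context: $\mathrm{BS}(m,n)=\langle a,t\mid ta^mt^{-1}=a^n\rangle$; $\Upsilon_{m,n}$ is its Cayley graph for $\{a,t\}$ (edges $g\to gs$ oriented, labeled $s$); $a$-lines and $t$-lines are the subgraphs spanned by left cosets of $\langle a\rangle$ and $\langle t\rangle$. $\Lambda_{m,n}$ has one vertex per $a$-line or $t$-line (of type $a$ or $t$), adjacent when the lines intersect; $\mathrm{lk}_\Lambda(u)$ is the set of neighbours of $u$. $T$ is the Bass–Serre tree whose vertices are the $a$-lines (= type-$a$ vertices), with one edge oriented from $\ell$ to $\ell'$ for each pair of $a$-lines such that $gt\in\ell'$ for some $g\in\ell$. Partial order: $v_1\le v_2$ if every edge of the geodesic from $v_1$ to $v_2$ in $T$ is oriented toward $v_2$; $<$ denotes strict order. *)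

theory Defs
  imports Main
begin

datatype gen = GA | GT

(* a letter is a generator together with an inversion flag (True = inverse) *)
type_synonym letter = "gen \<times> bool"
type_synonym word = "letter list"

definition letter_inv :: "letter \<Rightarrow> letter" where
  "letter_inv x = (fst x, \<not> snd x)"

definition gpow :: "gen \<Rightarrow> int \<Rightarrow> word" where
  "gpow s k = (if 0 \<le> k then replicate (nat k) (s, False) else replicate (nat (- k)) (s, True))"

definition bs_relator :: "int \<Rightarrow> int \<Rightarrow> word" where
  "bs_relator m n = [(GT, False)] @ gpow GA m @ [(GT, True)] @ gpow GA (- n)"

(* equality in BS(m,n) = <a,t | t a^m t^-1 = a^n>: the equivalence relation on words
   generated by inserting/deleting trivial pairs x x^-1 and the relator *)
inductive bs_eq :: "int \<Rightarrow> int \<Rightarrow> word \<Rightarrow> word \<Rightarrow> bool" for m n where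
  bs_refl: "bs_eq m n w w"
| bs_sym: "bs_eq m n u v \<Longrightarrow> bs_eq m n v u"
| bs_trans: "bs_eq m n u v \<Longrightarrow> bs_eq m n v w \<Longrightarrow> bs_eq m n u w"
| bs_cancel: "bs_eq m n (u @ [x, letter_inv x] @ v) (u @ v)"
| bs_rel: "bs_eq m n (u @ bs_relator m n @ v) (u @ v)"

definition bs_elem :: "int \<Rightarrow> int \<Rightarrow> word \<Rightarrow> word set" where
  "bs_elem m n w = {v. bs_eq m n w v}"

definition line :: "int \<Rightarrow> int \<Rightarrow> gen \<Rightarrow> word \<Rightarrow> word set set" where
  "line m n s g = {bs_elem m n (g @ gpow s k) | k. True}"

definition alines :: "int \<Rightarrow> int \<Rightarrow> word set set set" where
  "alines m n = {line m n GA g | g. True}"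

definition tlines :: "int \<Rightarrow> int \<Rightarrow> word set set set" where
  "tlines m n = {line m n GT g | g. True}"

datatype lvert = VA "word set set" | VT "word set set"

fun lset :: "lvert \<Rightarrow> word set set" where
  "lset (VA L) = L"
| "lset (VT L) = L"

definition Lverts :: "int \<Rightarrow> int \<Rightarrow> lvert set" where
  "Lverts m n = VA ` alines m n \<union> VT ` tlines m n"

definition Ladj :: "int \<Rightarrow> int \<Rightarrow> lvert \<Rightarrow> lvert \<Rightarrow> bool" where
  "Ladj m n x y \<longleftrightarrow> x \<in> Lverts m n \<and> y \<in> Lverts m n \<and> x \<noteq> y \<and> lset x \<inter> lset y \<noteq> {}"

definition Llink :: "int \<Rightarrow> int \<Rightarrow> lvert \<Rightarrow> lvert set" where
  "Llink m n u = {v. Ladj m n u v}"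

definition Tedge :: "int \<Rightarrow> int \<Rightarrow> word set set \<Rightarrow> word set set \<Rightarrow> bool" where
  "Tedge m n l l' \<longleftrightarrow> l \<in> alines m n \<and> l' \<in> alines m n \<and>
     (\<exists>g. bs_elem m n g \<in> l \<and> bs_elem m n (g @ [(GT, False)]) \<in> l')"

definition Tadj :: "int \<Rightarrow> int \<Rightarrow> word set set \<Rightarrow> word set set \<Rightarrow> bool" where
  "Tadj m n x y \<longleftrightarrow> Tedge m n x y \<or> Tedge m n y x"

definition Tpath :: "int \<Rightarrow> int \<Rightarrow> word set set list \<Rightarrow> word set set \<Rightarrow> word set set \<Rightarrow> bool" where
  "Tpath m n p x y \<longleftrightarrow> p \<noteq> [] \<and> hd p = x \<and> last p = y \<and> set p \<subseteq> alines m n \<and>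
     (\<forall>i. Suc i < length p \<longrightarrow> Tadj m n (p ! i) (p ! Suc i))"

definition Tgeodesic :: "int \<Rightarrow> int \<Rightarrow> word set set list \<Rightarrow> word set set \<Rightarrow> word set set \<Rightarrow> bool" where
  "Tgeodesic m n p x y \<longleftrightarrow> Tpath m n p x y \<and> (\<forall>q. Tpath m n q x y \<longrightarrow> length p \<le> length q)"

definition Tle :: "int \<Rightarrow> int \<Rightarrow> word set set \<Rightarrow> word set set \<Rightarrow> bool" where
  "Tle m n v1 v2 \<longleftrightarrow> v1 \<in> alines m n \<and> v2 \<in> alines m n \<and> (\<exists>p. Tgeodesic m n p v1 v2) \<and>
     (\<forall>p. Tgeodesic m n p v1 v2 \<longrightarrow> (\<forall>i. Suc i < length p \<longrightarrow> Tedge m n (p ! i) (p ! Suc i)))"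

definition Tless :: "int \<Rightarrow> int \<Rightarrow> word set set \<Rightarrow> word set set \<Rightarrow> bool" where
  "Tless m n v1 v2 \<longleftrightarrow> Tle m n v1 v2 \<and> v1 \<noteq> v2"

end

(*
  The a-lines g<a> are the vertices of the Bass--Serre tree T. They are encoded by normal forms:
  reduced lists of letters a^e t^(+-1) with e in a transversal of <a^n> resp. <a^m>. BS(m,n) acts on
  normal forms (the relator acts trivially), which makes membership of a word in a coset
  computable, and an oriented edge of T appends a t-letter or deletes a final t^-1-letter. Hence
  a directed path in T is determined by its ends and its length.

  A t-line h<t> meets exactly the a-lines h t^k <a>, which form a directed line in T. So if it
  meets u1 and u3, it runs along the directed path u1 -> u2 -> u3 and meets u2. Conversely,
  translating such a t-line by a suitable power a^c makes it branch off the path. An a^c fixes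
  the first j forward edges iff c passes j tests "divisible by n, then multiply by m/n"; as
  |m| < |n| some c passes exactly the tests from u1 up to u2, which gives a t-line meeting u1
  and u2 but not u3.
  Backwards the roles of m and n are exchanged: if m does not divide n some c passes exactly the
  tests from u3 back to u2, giving a t-line meeting u2 and u3 but not u1, while if m divides n every
  multiple of n passes all of them, which forces equality of the two intersections.
*)
theory Submission
  imports Defs
begin

section \<open>Integer divisibility\<close>

lemma ex_pow_not_dvd_mult_pow:
  fixes m n c :: int
  assumes "m \<noteq> 0" "\<not> m dvd n" "c \<noteq> 0"
  shows "\<exists>i. \<not> m ^ i dvd c * n ^ i"
proof (rule ccontr)
  assume "\<nexists>i. \<not> m ^ i dvd c * n ^ i"
  then have dvd: "m ^ i dvd c * n ^ i" for i by blast
  obtain g m' n' where mn: "m = m' * g" "n = n' * g" "coprime m' n'" and "g \<noteq> 0"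
    using gcd_coprime_exists[of m n] assms(1) by (metis gcd_eq_0_iff)
  have "\<bar>m'\<bar> \<noteq> 1"
  proof
    assume "\<bar>m'\<bar> = 1"
    then have "m' dvd n'" by (metis abs_dvd_iff one_dvd)
    then have "m dvd n" using mn(1,2) by (simp add: mult_dvd_mono)
    with assms(2) show False ..
  qed
  moreover have "m' \<noteq> 0" using mn(1) assms(1) by auto
  ultimately have "2 \<le> \<bar>m'\<bar>" by linarith
  have "m' ^ i dvd c" for i
  proof -
    have "g ^ i * m' ^ i dvd g ^ i * (c * n' ^ i)"
      using dvd[of i] unfolding mn(1,2) by (simp add: power_mult_distrib mult_ac)
    then have "m' ^ i dvd c * n' ^ i"
      using \<open>g \<noteq> 0\<close> by simp
    then show ?thesis
      using mn(3) by (simp add: coprime_dvd_mult_left_iff)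
  qed
  then have "\<bar>m'\<bar> ^ nat \<bar>c\<bar> \<le> \<bar>c\<bar>"
    using assms(3) by (metis dvd_imp_le_int power_abs)
  moreover have "2 ^ nat \<bar>c\<bar> \<le> \<bar>m'\<bar> ^ nat \<bar>c\<bar>"
    using \<open>2 \<le> \<bar>m'\<bar>\<close> by (simp add: power_mono)
  moreover have "int (nat \<bar>c\<bar>) < int (2 ^ nat \<bar>c\<bar>)"
    by (simp only: of_nat_less_iff less_exp)
  ultimately show False by simp
qed

lemma mult_div_abs_mult_sgn: "x \<noteq> 0 \<Longrightarrow> (x * q) div \<bar>x\<bar> * sgn x = (q :: int)"
proof -
  assume "x \<noteq> 0"
  have "x * q = (sgn x * q) * \<bar>x\<bar>"
    by (metis mult.assoc mult.commute sgn_mult_abs)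
  then have "(x * q) div \<bar>x\<bar> = sgn x * q"
    using \<open>x \<noteq> 0\<close> by (simp only:) simp
  then show ?thesis
    using \<open>x \<noteq> 0\<close> by (simp add: sgn_if)
qed

section \<open>Word calculus in BS(m,n)\<close>

abbreviation t_word :: word where "t_word \<equiv> [(GT, False)]"
abbreviation t_inv_word :: word where "t_inv_word \<equiv> [(GT, True)]"

declare bs_eq.bs_trans [trans]

lemma bs_eq_context: "bs_eq m n u v \<Longrightarrow> bs_eq m n (p @ u @ q) (p @ v @ q)"
proof (induction rule: bs_eq.induct)
  case (bs_cancel u x v)
  show ?case using bs_eq.bs_cancel[of m n "p @ u" x "v @ q"] by simp
next
  case (bs_rel u v)
  show ?case using bs_eq.bs_rel[of m n "p @ u" "v @ q"] by simp
qed (blast intro: bs_eq.bs_refl bs_eq.bs_sym bs_eq.bs_trans)+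

lemma bs_eq_append: "bs_eq m n u u' \<Longrightarrow> bs_eq m n v v' \<Longrightarrow> bs_eq m n (u @ v) (u' @ v')"
  using bs_eq_context[of m n u u' "[]" v] bs_eq_context[of m n v v' u' "[]"]
  by (metis append_Nil append_Nil2 bs_eq.bs_trans)

lemma bs_eq_prefix: "bs_eq m n v v' \<Longrightarrow> bs_eq m n (u @ v) (u @ v')"
  by (rule bs_eq_append[OF bs_eq.bs_refl])

lemma bs_eq_suffix: "bs_eq m n u u' \<Longrightarrow> bs_eq m n (u @ v) (u' @ v)"
  by (rule bs_eq_append[OF _ bs_eq.bs_refl])

lemma letter_inv_simps [simp]:
  "letter_inv (s, False) = (s, True)" "letter_inv (s, True) = (s, False)"
  "letter_inv (letter_inv x) = x"
  by (simp_all add: letter_inv_def)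

lemma bs_eq_cancel_inv: "bs_eq m n (p @ [letter_inv x, x] @ q) (p @ q)"
  using bs_eq.bs_cancel[of m n p "letter_inv x" q] by simp

lemma bs_eq_replicate_cancel:
  "bs_eq m n (replicate i x @ replicate j (letter_inv x))
     (if j \<le> i then replicate (i - j) x else replicate (j - i) (letter_inv x))"
proof (induction i arbitrary: j)
  case (Suc i)
  show ?case
  proof (cases j)
    case (Suc j')
    have "replicate (Suc i) x @ replicate j (letter_inv x)
        = replicate i x @ [x, letter_inv x] @ replicate j' (letter_inv x)"
      using Suc by (simp add: replicate_append_same[symmetric])
    also have "bs_eq m n \<dots> (replicate i x @ replicate j' (letter_inv x))"
      by (rule bs_eq.bs_cancel)
    also have "bs_eq m n \<dots> (if j' \<le> i then replicate (i - j') x else replicate (j' - i) (letter_inv x))"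
      by (rule Suc.IH)
    also have "\<dots> = (if j \<le> Suc i then replicate (Suc i - j) x else replicate (j - Suc i) (letter_inv x))"
      using Suc by simp
    finally show ?thesis .
  qed (auto intro: bs_eq.bs_refl)
qed (auto intro: bs_eq.bs_refl)

lemma gpow_0 [simp]: "gpow s 0 = []"
  by (simp add: gpow_def)

lemma gpow_add: "bs_eq m n (gpow s i @ gpow s j) (gpow s (i + j))"
proof -
  consider "0 \<le> i" "0 \<le> j" | "0 \<le> i" "j < 0" | "i < 0" "0 \<le> j" | "i < 0" "j < 0"
    by linarith
  then show ?thesis
  proof cases
    case 1
    then show ?thesis
      by (simp add: gpow_def replicate_add[symmetric] nat_add_distrib bs_eq.bs_refl)
  next
    case 2
    have "bs_eq m n (replicate (nat i) (s, False) @ replicate (nat (- j)) (letter_inv (s, False)))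
        (if nat (- j) \<le> nat i then replicate (nat i - nat (- j)) (s, False)
         else replicate (nat (- j) - nat i) (letter_inv (s, False)))"
      by (rule bs_eq_replicate_cancel)
    moreover have "(if nat (- j) \<le> nat i then replicate (nat i - nat (- j)) (s, False)
        else replicate (nat (- j) - nat i) (letter_inv (s, False))) = gpow s (i + j)"
      using 2 by (auto simp: gpow_def nat_diff_distrib)
    ultimately show ?thesis using 2 by (simp add: gpow_def)
  next
    case 3
    have "bs_eq m n (replicate (nat (- i)) (s, True) @ replicate (nat j) (letter_inv (s, True)))
        (if nat j \<le> nat (- i) then replicate (nat (- i) - nat j) (s, True)
         else replicate (nat j - nat (- i)) (letter_inv (s, True)))"
      by (rule bs_eq_replicate_cancel)
    moreover have "(if nat j \<le> nat (- i) then replicate (nat (- i) - nat j) (s, True)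
        else replicate (nat j - nat (- i)) (letter_inv (s, True))) = gpow s (i + j)"
      using 3 by (auto simp: gpow_def nat_diff_distrib)
    ultimately show ?thesis using 3 by (simp add: gpow_def)
  next
    case 4
    then have "nat (- (i + j)) = nat (- i) + nat (- j)" by simp
    with 4 show ?thesis
      by (simp add: gpow_def replicate_add[symmetric] bs_eq.bs_refl)
  qed
qed

lemma gpow_add_prefix: "bs_eq m n (h @ gpow s i @ gpow s j) (h @ gpow s (i + j))"
  by (intro bs_eq_prefix gpow_add)

lemma gpow_n_t: "bs_eq m n (gpow GA n @ t_word) (t_word @ gpow GA m)"
proof -
  have "bs_eq m n (gpow GA n @ t_word) (bs_relator m n @ gpow GA n @ t_word)"
    using bs_eq.bs_sym[OF bs_eq.bs_rel[of m n "[]" "gpow GA n @ t_word"]] by simp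
  also have "bs_relator m n @ gpow GA n @ t_word
      = (t_word @ gpow GA m @ t_inv_word) @ (gpow GA (- n) @ gpow GA n) @ t_word"
    by (simp add: bs_relator_def)
  also have "bs_eq m n \<dots> ((t_word @ gpow GA m @ t_inv_word) @ gpow GA 0 @ t_word)"
    using gpow_add[of m n GA "- n" n] by (intro bs_eq_prefix bs_eq_suffix) simp
  also have "\<dots> = (t_word @ gpow GA m) @ [letter_inv (GT, False), (GT, False)] @ []"
    by simp
  also have "bs_eq m n \<dots> (t_word @ gpow GA m)"
    using bs_eq_cancel_inv[of m n "t_word @ gpow GA m" "(GT, False)" "[]"] by simp
  finally show ?thesis .
qed

lemma gpow_mult_n_t_nat: "bs_eq m n (gpow GA (int j * n) @ t_word) (t_word @ gpow GA (int j * m))"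
proof (induction j)
  case (Suc j)
  have "bs_eq m n (gpow GA (int (Suc j) * n) @ t_word) (gpow GA (int j * n) @ gpow GA n @ t_word)"
    using bs_eq_suffix[OF bs_eq.bs_sym[OF gpow_add[of m n GA "int j * n" n]], of t_word]
    by (simp add: algebra_simps)
  also have "bs_eq m n \<dots> (gpow GA (int j * n) @ t_word @ gpow GA m)"
    by (intro bs_eq_prefix gpow_n_t)
  also have "bs_eq m n \<dots> (t_word @ gpow GA (int j * m) @ gpow GA m)"
    using bs_eq_suffix[OF Suc.IH, of "gpow GA m"] by simp
  also have "bs_eq m n \<dots> (t_word @ gpow GA (int (Suc j) * m))"
    using gpow_add_prefix[of m n t_word GA "int j * m" m] by (simp add: algebra_simps)
  finally show ?case .
qed (simp add: bs_eq.bs_refl)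

lemma gpow_mult_n_t: "bs_eq m n (gpow GA (j * n) @ t_word) (t_word @ gpow GA (j * m))"
proof (cases "0 \<le> j")
  case True
  then show ?thesis using gpow_mult_n_t_nat[of m n "nat j"] by simp
next
  case False
  define k where "k = int (nat (- j))"
  have j: "j = - k" using False by (simp add: k_def)
  have "bs_eq m n (gpow GA (j * n) @ (t_word @ gpow GA (k * m)) @ gpow GA (j * m))
      (gpow GA (j * n) @ t_word)"
    using bs_eq_prefix[OF gpow_add[of m n GA "k * m" "j * m"], of "gpow GA (j * n) @ t_word"] j
    by simp
  then have "bs_eq m n (gpow GA (j * n) @ t_word)
      (gpow GA (j * n) @ (t_word @ gpow GA (k * m)) @ gpow GA (j * m))"
    by (rule bs_eq.bs_sym)
  also have "bs_eq m n \<dots> (gpow GA (j * n) @ (gpow GA (k * n) @ t_word) @ gpow GA (j * m))"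
    using bs_eq.bs_sym[OF gpow_mult_n_t_nat[of m n "nat (- j)"]] unfolding k_def[symmetric]
    by (intro bs_eq_prefix bs_eq_suffix)
  also have "bs_eq m n \<dots> (gpow GA 0 @ t_word @ gpow GA (j * m))"
    using bs_eq_suffix[OF gpow_add[of m n GA "j * n" "k * n"], of "t_word @ gpow GA (j * m)"] j
    by simp
  finally show ?thesis by simp
qed

lemma t_inv_gpow_mult_n: "bs_eq m n (t_inv_word @ gpow GA (j * n)) (gpow GA (j * m) @ t_inv_word)"
proof -
  have "bs_eq m n (t_inv_word @ gpow GA (j * n)) (t_inv_word @ (gpow GA (j * n) @ t_word) @ t_inv_word)"
    using bs_eq.bs_sym[OF bs_eq_cancel_inv[of m n "t_inv_word @ gpow GA (j * n)" "(GT, True)" "[]"]]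
    by simp
  also have "bs_eq m n \<dots> (t_inv_word @ (t_word @ gpow GA (j * m)) @ t_inv_word)"
    by (intro bs_eq_prefix bs_eq_suffix gpow_mult_n_t)
  also have "bs_eq m n \<dots> (gpow GA (j * m) @ t_inv_word)"
    using bs_eq_cancel_inv[of m n "[]" "(GT, False)"] by simp
  finally show ?thesis .
qed

definition word_inv :: "word \<Rightarrow> word" where
  "word_inv w = rev (map letter_inv w)"

lemma bs_eq_word_inv_cancel: "bs_eq m n (word_inv w @ w) []"
proof (induction w)
  case (Cons x w)
  have "bs_eq m n (word_inv (x # w) @ x # w) (word_inv w @ w)"
    using bs_eq_cancel_inv[of m n "word_inv w" x w] by (simp add: word_inv_def)
  then show ?case using Cons.IH by (rule bs_eq.bs_trans)
qed (simp add: word_inv_def bs_eq.bs_refl)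

lemma bs_elem_eq_iff: "bs_elem m n g = bs_elem m n h \<longleftrightarrow> bs_eq m n g h"
proof
  assume "bs_elem m n g = bs_elem m n h"
  then show "bs_eq m n g h"
    using bs_eq.bs_refl[of m n h] by (auto simp: bs_elem_def)
next
  assume "bs_eq m n g h"
  then show "bs_elem m n g = bs_elem m n h"
    unfolding bs_elem_def by (blast intro: bs_eq.bs_sym bs_eq.bs_trans)
qed

section \<open>Normal forms of the cosets of \<open>\<langle>a\<rangle>\<close>\<close>

text \<open>A normal form is a list of pairs (e, s), read as the word a^e t_s with t_True = t,
  t_False = t^-1 and 0 <= e < |n| resp. |m|, in which no a^0 sits between opposite letters
  t_s, t_(~s). The list [x_1, ..., x_k] stands for the coset x_1 ... x_k <a>, i.e. for the vertex
  of the Bass--Serre tree reached from <a> along this reduced edge path.\<close>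

type_synonym nf = "(int \<times> bool) list"

locale baumslag_solitar =
  fixes m n :: int
  assumes m_nonzero: "m \<noteq> 0" and n_nonzero: "n \<noteq> 0"
begin

definition den :: "bool \<Rightarrow> int" where
  "den s = (if s then n else m)"

definition num :: "bool \<Rightarrow> int" where
  "num s = (if s then m else n)"

lemma den_nonzero: "den s \<noteq> 0"
  using m_nonzero n_nonzero by (simp add: den_def)

lemma abs_den_pos: "\<bar>den s\<bar> > 0"
  using den_nonzero by simp

fun normal :: "nf \<Rightarrow> bool" where
  "normal [] = True"
| "normal ((e, s) # r) \<longleftrightarrow> 0 \<le> e \<and> e < \<bar>den s\<bar> \<and> normal r \<and>
     (case r of [] \<Rightarrow> True | (e', s') # _ \<Rightarrow> s' = s \<or> e' \<noteq> 0)"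

text \<open>Left multiplication by a^k: if e + k = e' + q |d| with d = den s, the relation gives
  a^(e+k) t_s = a^e' t_s a^c with c = q sgn(d) num s, and the carry a^c is passed on to the rest
  of the list.\<close>

fun act_a :: "int \<Rightarrow> nf \<Rightarrow> nf" where
  "act_a k [] = []"
| "act_a k ((e, s) # r) =
     ((e + k) mod \<bar>den s\<bar>, s) # act_a ((e + k) div \<bar>den s\<bar> * (sgn (den s) * num s)) r"

definition act_t :: "bool \<Rightarrow> nf \<Rightarrow> nf" where
  "act_t s v = (if v \<noteq> [] \<and> hd v = (0, \<not> s) then tl v else (0, s) # v)"

fun act_letter :: "letter \<Rightarrow> nf \<Rightarrow> nf" where
  "act_letter (GA, b) = act_a (if b then -1 else 1)"
| "act_letter (GT, b) = act_t (\<not> b)"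

definition act :: "word \<Rightarrow> nf \<Rightarrow> nf" where
  "act w v = foldr act_letter w v"

lemma act_a_add: "act_a k (act_a l v) = act_a (k + l) v"
proof (induction v arbitrary: k l)
  case (Cons x r)
  obtain e s where x: "x = (e, s)" by fastforce
  let ?d = "\<bar>den s\<bar>"
  have "((e + l) mod ?d + k) mod ?d = (e + (k + l)) mod ?d"
    by (metis add.assoc add.commute mod_add_left_eq)
  moreover have "((e + l) mod ?d + k) div ?d + (e + l) div ?d = (e + (k + l)) div ?d"
  proof -
    have "e + (k + l) = ((e + l) mod ?d + k) + (e + l) div ?d * ?d"
      by (simp add: algebra_simps)
    then show ?thesis
      using abs_den_pos[of s] by (metis add.commute div_mult_self1 less_irrefl)
  qed
  ultimately show ?case
    using Cons.IH x by (simp add: distrib_right[symmetric])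
qed simp

lemma act_a_0: "normal v \<Longrightarrow> act_a 0 v = v"
  by (induction v rule: normal.induct) auto

lemma normal_act_a: "normal v \<Longrightarrow> normal (act_a k v)"
proof (induction v arbitrary: k rule: normal.induct)
  case (2 e s r)
  let ?c = "(e + k) div \<bar>den s\<bar> * (sgn (den s) * num s)"
  have carry_mod: "s' \<noteq> s \<Longrightarrow> ?c mod \<bar>den s'\<bar> = 0" for s'
    by (cases s; cases s') (auto simp: den_def num_def)
  have "normal (act_a ?c r)" using 2 by simp
  moreover have "case act_a ?c r of [] \<Rightarrow> True | (e', s') # _ \<Rightarrow> s' = s \<or> e' \<noteq> 0"
  proof (cases r)
    case (Cons y r')
    obtain e' s' where y: "y = (e', s')" by fastforce
    have "s' = s \<or> (e' + ?c) mod \<bar>den s'\<bar> \<noteq> 0"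
    proof (cases "s' = s")
      case False
      then have "(e' + ?c) mod \<bar>den s'\<bar> = e'"
        using 2(2) Cons y carry_mod[of s'] by (simp add: mod_add_right_eq[symmetric])
      moreover have "e' \<noteq> 0" using 2(2) Cons y False by simp
      ultimately show ?thesis by simp
    qed simp
    then show ?thesis using Cons y by simp
  qed simp
  ultimately show ?case using abs_den_pos[of s] by simp
qed simp

lemma normal_act_t: "normal v \<Longrightarrow> normal (act_t s v)"
  using abs_den_pos[of s] by (cases v) (auto simp: act_t_def)

lemma act_t_inverse: "normal v \<Longrightarrow> act_t s (act_t (\<not> s) v) = v"
proof (cases v)
  case (Cons y r)
  assume "normal v"
  then show ?thesis
    using Cons by (cases "y = (0, s)"; cases r) (auto simp: act_t_def)
qed (simp add: act_t_def)

lemma act_Nil [simp]: "act [] v = v"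
  by (simp add: act_def)

lemma act_Cons: "act (x # w) v = act_letter x (act w v)"
  by (simp add: act_def)

lemma act_append: "act (u @ w) v = act u (act w v)"
  by (simp add: act_def)

lemma normal_act: "normal v \<Longrightarrow> normal (act w v)"
proof (induction w)
  case (Cons x w)
  then show ?case
    by (cases x rule: act_letter.cases) (auto simp: act_Cons normal_act_a normal_act_t)
qed simp

lemma act_gpow_a: "normal v \<Longrightarrow> act (gpow GA k) v = act_a k v"
proof -
  have "normal v \<Longrightarrow> act (replicate j (GA, b)) v = act_a (if b then - int j else int j) v" for j b
    by (induction j) (auto simp: act_a_0 act_Cons act_a_add add.commute)
  then show "normal v \<Longrightarrow> ?thesis" by (simp add: gpow_def)
qed

lemma act_relator: "normal v \<Longrightarrow> act (bs_relator m n) v = v"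
proof -
  assume "normal v"
  define w where "w = act_a (- n) v"
  have w: "normal w" using \<open>normal v\<close> by (simp add: w_def normal_act_a)
  have unit: "x div \<bar>x\<bar> * sgn x = 1" if "x \<noteq> 0" for x :: int
    using mult_div_abs_mult_sgn[OF that, of 1] by simp
  have "act_t True (act_a m (act_t False w)) = act_a n w"
  proof (cases "w \<noteq> [] \<and> hd w = (0, True)")
    case True
    then obtain r where r: "w = (0, True) # r" by (cases w) auto
    have "\<not> (act_a m r \<noteq> [] \<and> hd (act_a m r) = (0, False))"
    proof (cases r)
      case (Cons y r')
      obtain e s where y: "y = (e, s)" by fastforce
      have "\<not> s \<Longrightarrow> (e + m) mod \<bar>m\<bar> \<noteq> 0"
        using w r Cons y by (auto simp: den_def mod_add_right_eq[symmetric])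
      then show ?thesis using Cons y by (auto simp: den_def)
    qed simp
    then show ?thesis
      using r n_nonzero unit[OF n_nonzero]
      by (auto simp: act_t_def den_def num_def mult.assoc[symmetric])
  next
    case False
    then show ?thesis
      using m_nonzero unit[OF m_nonzero]
      by (auto simp: act_t_def den_def num_def mult.assoc[symmetric])
  qed
  moreover have "act (bs_relator m n) v = act_t True (act_a m (act_t False w))"
    using \<open>normal v\<close>
    by (simp add: w_def bs_relator_def act_append act_gpow_a act_Cons normal_act_a normal_act_t)
  ultimately show ?thesis
    using act_a_add[of n "- n" v] act_a_0[OF \<open>normal v\<close>] by (simp add: w_def)
qed

lemma act_cancel: "normal v \<Longrightarrow> act [x, letter_inv x] v = v"
  using act_t_inverse[of v] act_t_inverse[of v "\<not> _"]
  by (cases x rule: act_letter.cases) (auto simp: act_Cons letter_inv_def act_a_add act_a_0)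

lemma act_bs_eq: "bs_eq m n u w \<Longrightarrow> normal v \<Longrightarrow> act u v = act w v"
proof (induction arbitrary: v rule: bs_eq.induct)
  case (bs_cancel u x w)
  then show ?case
    using act_cancel[OF normal_act[OF bs_cancel.prems], of x w] by (simp add: act_append act_Cons)
next
  case (bs_rel u w)
  then show ?case
    using act_relator[OF normal_act[OF bs_rel.prems], of w] by (simp add: act_append)
qed auto

lemma gpow_abs_den_t:
  "bs_eq m n (gpow GA (q * \<bar>den s\<bar>) @ [(GT, \<not> s)]) ([(GT, \<not> s)] @ gpow GA (q * (sgn (den s) * num s)))"
proof (cases s)
  case True
  then show ?thesis
    using gpow_mult_n_t[of m n "q * sgn n"] by (simp add: den_def num_def abs_sgn mult_ac)
next
  case False
  then show ?thesis
    using bs_eq.bs_sym[OF t_inv_gpow_mult_n[of m n "q * sgn m"]]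
    by (simp add: den_def num_def abs_sgn mult_ac)
qed

fun nf_word :: "nf \<Rightarrow> word" where
  "nf_word [] = []"
| "nf_word ((e, s) # r) = gpow GA e @ [(GT, \<not> s)] @ nf_word r"

definition coset_nf :: "word \<Rightarrow> nf" where
  "coset_nf g = act g []"

lemma normal_coset_nf: "normal (coset_nf g)"
  by (simp add: coset_nf_def normal_act)

lemma normal_appendD: "normal (v @ u) \<Longrightarrow> normal v"
  by (induction v rule: normal.induct) (auto split: list.splits)

lemma nf_word_append: "nf_word (v @ u) = nf_word v @ nf_word u"
  by (induction v rule: nf_word.induct) auto

lemma act_nf_word: "normal (v @ u) \<Longrightarrow> act (nf_word v) u = v @ u"
proof (induction v)
  case (Cons x r)
  obtain e s where x: "x = (e, s)" by fastforce
  have "normal ((e, s) # r @ u)" using Cons.prems x by simp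
  then have r: "normal (r @ u)" and e: "0 \<le> e" "e < \<bar>den s\<bar>"
    and pinch: "case r @ u of [] \<Rightarrow> True | (e', s') # _ \<Rightarrow> s' = s \<or> e' \<noteq> 0"
    by auto
  have "act_t s (r @ u) = (0, s) # r @ u"
    using pinch by (cases "r @ u") (auto simp: act_t_def)
  moreover have "normal ((0, s) # r @ u)"
    using r pinch abs_den_pos[of s] by simp
  ultimately show ?case
    using x e Cons.IH[OF r] act_a_0[OF r]
    by (simp add: act_append act_Cons act_gpow_a)
qed simp

lemma gpow_a_nf_word:
  "normal v \<Longrightarrow> \<exists>j. bs_eq m n (gpow GA k @ nf_word v) (nf_word (act_a k v) @ gpow GA j)"
proof (induction v arbitrary: k)
  case Nil
  show ?case by (rule exI[of _ k]) (simp add: bs_eq.bs_refl)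
next
  case (Cons x r)
  obtain e s where x: "x = (e, s)" by fastforce
  define e' where "e' = (e + k) mod \<bar>den s\<bar>"
  define q where "q = (e + k) div \<bar>den s\<bar>"
  define c where "c = q * (sgn (den s) * num s)"
  obtain j where j: "bs_eq m n (gpow GA c @ nf_word r) (nf_word (act_a c r) @ gpow GA j)"
    using Cons x by auto
  have "bs_eq m n (gpow GA k @ nf_word ((e, s) # r)) ((gpow GA k @ gpow GA e) @ [(GT, \<not> s)] @ nf_word r)"
    by (simp add: bs_eq.bs_refl)
  also have "bs_eq m n \<dots> (gpow GA (e' + q * \<bar>den s\<bar>) @ [(GT, \<not> s)] @ nf_word r)"
    using gpow_add[of m n GA k e] by (intro bs_eq_suffix) (simp add: e'_def q_def add.commute)
  also have "bs_eq m n \<dots> (gpow GA e' @ (gpow GA (q * \<bar>den s\<bar>) @ [(GT, \<not> s)]) @ nf_word r)"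
    using bs_eq_suffix[OF bs_eq.bs_sym[OF gpow_add[of m n GA e' "q * \<bar>den s\<bar>"]]] by simp
  also have "bs_eq m n \<dots> (gpow GA e' @ ([(GT, \<not> s)] @ gpow GA c) @ nf_word r)"
    unfolding c_def by (intro bs_eq_prefix bs_eq_suffix gpow_abs_den_t)
  also have "\<dots> = (gpow GA e' @ [(GT, \<not> s)]) @ (gpow GA c @ nf_word r)"
    by simp
  also have "bs_eq m n \<dots> ((gpow GA e' @ [(GT, \<not> s)]) @ (nf_word (act_a c r) @ gpow GA j))"
    using j by (rule bs_eq_prefix)
  also have "\<dots> = nf_word (act_a k ((e, s) # r)) @ gpow GA j"
    by (simp add: e'_def q_def c_def)
  finally show ?case using x by blast
qed

lemma letter_nf_word:
  assumes "normal v"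
  shows "\<exists>j. bs_eq m n (x # nf_word v) (nf_word (act_letter x v) @ gpow GA j)"
proof (cases x rule: act_letter.cases)
  case (1 b)
  then have "[x] = gpow GA (if b then -1 else 1)" by (simp add: gpow_def)
  then show ?thesis using gpow_a_nf_word[OF assms] 1 by (metis append_Cons append_Nil act_letter.simps(1))
next
  case (2 b)
  show ?thesis
  proof (cases "v \<noteq> [] \<and> hd v = (0, b)")
    case True
    then obtain r where r: "v = (0, b) # r" by (cases v) auto
    then have "x # nf_word v = [] @ [(GT, b), letter_inv (GT, b)] @ nf_word r"
      using 2 by (cases b) auto
    moreover have "act_letter x v = r" using r 2 by (simp add: act_t_def)
    ultimately show ?thesis
      using bs_eq.bs_cancel[of m n "[]" "(GT, b)" "nf_word r"] by (metis append_Nil append_Nil2 gpow_0)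
  next
    case False
    then have "x # nf_word v = nf_word (act_letter x v) @ gpow GA 0"
      using 2 by (auto simp: act_t_def)
    then show ?thesis using bs_eq.bs_refl by metis
  qed
qed

lemma bs_eq_nf_word_coset_nf: "\<exists>i. bs_eq m n g (nf_word (coset_nf g) @ gpow GA i)"
proof (induction g)
  case Nil
  show ?case by (rule exI[of _ 0]) (simp add: coset_nf_def bs_eq.bs_refl)
next
  case (Cons x g)
  obtain i where i: "bs_eq m n g (nf_word (coset_nf g) @ gpow GA i)"
    using Cons.IH by blast
  obtain j where j: "bs_eq m n (x # nf_word (coset_nf g)) (nf_word (act_letter x (coset_nf g)) @ gpow GA j)"
    using letter_nf_word[OF normal_coset_nf] by blast
  have "bs_eq m n (x # g) ((x # nf_word (coset_nf g)) @ gpow GA i)"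
    using bs_eq_prefix[OF i, of "[x]"] by simp
  also have "bs_eq m n \<dots> (nf_word (act_letter x (coset_nf g)) @ gpow GA j @ gpow GA i)"
    using bs_eq_suffix[OF j] by simp
  also have "bs_eq m n \<dots> (nf_word (act_letter x (coset_nf g)) @ gpow GA (j + i))"
    by (rule gpow_add_prefix)
  finally show ?case by (auto simp: coset_nf_def act_Cons)
qed

lemma coset_nf_bs_eq: "bs_eq m n g h \<Longrightarrow> coset_nf g = coset_nf h"
  by (simp add: coset_nf_def act_bs_eq)

lemma coset_nf_append_gpow_a: "coset_nf (g @ gpow GA k) = coset_nf g"
  by (simp add: coset_nf_def act_append act_gpow_a)

lemma coset_nf_eq_iff: "coset_nf h = coset_nf g \<longleftrightarrow> (\<exists>k. bs_eq m n h (g @ gpow GA k))"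
proof
  assume eq: "coset_nf h = coset_nf g"
  obtain i where i: "bs_eq m n g (nf_word (coset_nf g) @ gpow GA i)"
    using bs_eq_nf_word_coset_nf by blast
  obtain j where j: "bs_eq m n h (nf_word (coset_nf g) @ gpow GA j)"
    using bs_eq_nf_word_coset_nf eq by metis
  have "bs_eq m n (g @ gpow GA (j - i)) (nf_word (coset_nf g) @ gpow GA i @ gpow GA (j - i))"
    using bs_eq_suffix[OF i] by simp
  also have "bs_eq m n \<dots> (nf_word (coset_nf g) @ gpow GA j)"
    using gpow_add_prefix[of m n _ GA i "j - i"] by simp
  finally show "\<exists>k. bs_eq m n h (g @ gpow GA k)"
    using j by (meson bs_eq.bs_sym bs_eq.bs_trans)
next
  assume "\<exists>k. bs_eq m n h (g @ gpow GA k)"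
  then show "coset_nf h = coset_nf g"
    using coset_nf_bs_eq coset_nf_append_gpow_a by metis
qed

lemma coset_nf_append: "coset_nf (x @ w) = act x (coset_nf w)"
  by (simp add: coset_nf_def act_append)

lemma coset_nf_prefix_eq_iff: "coset_nf (x @ u) = coset_nf (x @ w) \<longleftrightarrow> coset_nf u = coset_nf w"
proof
  assume "coset_nf (x @ u) = coset_nf (x @ w)"
  then have "act (word_inv x @ x) (coset_nf u) = act (word_inv x @ x) (coset_nf w)"
    by (simp add: coset_nf_append act_append)
  then show "coset_nf u = coset_nf w"
    using act_bs_eq[OF bs_eq_word_inv_cancel normal_coset_nf] by simp
qed (simp add: coset_nf_append)

lemma coset_nf_gpow_add: "coset_nf (h @ gpow s i @ gpow s j) = coset_nf (h @ gpow s (i + j))"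
  by (intro coset_nf_bs_eq gpow_add_prefix)

section \<open>Lines of the Cayley graph and the link of an \<open>a\<close>-line\<close>

lemma aline_eq: "line m n GA g = {bs_elem m n h | h. coset_nf h = coset_nf g}"
proof (intro set_eqI iffI)
  fix x assume "x \<in> line m n GA g"
  then obtain k where "x = bs_elem m n (g @ gpow GA k)" by (auto simp: line_def)
  then show "x \<in> {bs_elem m n h | h. coset_nf h = coset_nf g}"
    using coset_nf_append_gpow_a by blast
next
  fix x assume "x \<in> {bs_elem m n h | h. coset_nf h = coset_nf g}"
  then obtain h k where "x = bs_elem m n h" "bs_eq m n h (g @ gpow GA k)"
    using coset_nf_eq_iff by blast
  then show "x \<in> line m n GA g"
    by (auto simp: line_def bs_elem_eq_iff)
qed

lemma bs_elem_mem_aline_iff: "bs_elem m n h \<in> line m n GA g \<longleftrightarrow> coset_nf h = coset_nf g"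
  unfolding aline_eq by (auto simp: bs_elem_eq_iff dest: coset_nf_bs_eq intro: bs_eq.bs_refl)

lemma aline_eq_iff: "line m n GA g = line m n GA g' \<longleftrightarrow> coset_nf g = coset_nf g'"
proof
  assume "line m n GA g = line m n GA g'"
  moreover have "bs_elem m n g \<in> line m n GA g"
    by (simp add: bs_elem_mem_aline_iff)
  ultimately show "coset_nf g = coset_nf g'"
    by (simp add: bs_elem_mem_aline_iff)
qed (simp add: aline_eq)

lemma aline_disjoint: "line m n GA g \<noteq> line m n GA g' \<Longrightarrow> line m n GA g \<inter> line m n GA g' = {}"
proof -
  have "coset_nf g = coset_nf g'" if x: "x \<in> line m n GA g" "x \<in> line m n GA g'" for x
  proof -
    obtain k where "x = bs_elem m n (g @ gpow GA k)" using x(1) by (auto simp: line_def)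
    then show ?thesis using x(2) by (simp add: bs_elem_mem_aline_iff coset_nf_append_gpow_a)
  qed
  then show "line m n GA g \<noteq> line m n GA g' \<Longrightarrow> ?thesis" by (auto simp: aline_eq_iff)
qed

definition tline_meets :: "word \<Rightarrow> nf \<Rightarrow> bool" where
  "tline_meets h v \<longleftrightarrow> (\<exists>k. coset_nf (h @ gpow GT k) = v)"

definition tline_vertices :: "nf \<Rightarrow> lvert set" where
  "tline_vertices v = {VT (line m n GT h) | h. tline_meets h v}"

lemma tline_meets_aline_iff:
  "line m n GT h \<inter> line m n GA g \<noteq> {} \<longleftrightarrow> tline_meets h (coset_nf g)"
proof
  assume "line m n GT h \<inter> line m n GA g \<noteq> {}"
  then obtain k where "bs_elem m n (h @ gpow GT k) \<in> line m n GA g"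
    by (auto simp: line_def)
  then show "tline_meets h (coset_nf g)"
    by (auto simp: tline_meets_def bs_elem_mem_aline_iff)
next
  assume "tline_meets h (coset_nf g)"
  then obtain k where "bs_elem m n (h @ gpow GT k) \<in> line m n GA g"
    by (auto simp: tline_meets_def bs_elem_mem_aline_iff)
  moreover have "bs_elem m n (h @ gpow GT k) \<in> line m n GT h"
    by (auto simp: line_def)
  ultimately show "line m n GT h \<inter> line m n GA g \<noteq> {}"
    by blast
qed

definition aline_nf :: "word set set \<Rightarrow> nf" where
  "aline_nf l = coset_nf (SOME g. l = line m n GA g)"

lemma aline_nf_line: "aline_nf (line m n GA g) = coset_nf g"
proof -
  have "line m n GA g = line m n GA (SOME g'. line m n GA g = line m n GA g')"
    by (rule someI[of _ g]) simp
  then show ?thesis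
    by (simp add: aline_nf_def aline_eq_iff)
qed

lemma Llink_VA:
  assumes "u \<in> alines m n"
  shows "Llink m n (VA u) = tline_vertices (aline_nf u)"
proof -
  obtain g where g: "u = line m n GA g" using assms by (auto simp: alines_def)
  have no_VA: "\<not> Ladj m n (VA u) (VA u')" for u'
    using aline_disjoint by (auto simp: Ladj_def Lverts_def alines_def g)
  have VT_adj: "Ladj m n (VA u) (VT l) \<longleftrightarrow> (\<exists>h. l = line m n GT h \<and> tline_meets h (coset_nf g))" for l
    using tline_meets_aline_iff assms by (auto simp: Ladj_def Lverts_def tlines_def g Int_commute)
  show ?thesis
  proof (intro set_eqI iffI)
    fix y assume "y \<in> Llink m n (VA u)"
    then have "Ladj m n (VA u) y" by (simp add: Llink_def)
    then show "y \<in> tline_vertices (aline_nf u)"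
      using no_VA VT_adj by (cases y) (auto simp: g aline_nf_line tline_vertices_def)
  next
    fix y assume "y \<in> tline_vertices (aline_nf u)"
    then show "y \<in> Llink m n (VA u)"
      using VT_adj by (auto simp: Llink_def g aline_nf_line tline_vertices_def)
  qed
qed

end

section \<open>Directed paths in the Bass--Serre tree\<close>

definition nf_edge :: "nf \<Rightarrow> nf \<Rightarrow> bool" where
  "nf_edge v v' \<longleftrightarrow> (\<exists>e. v' = v @ [(e, True)]) \<or> (\<exists>e. v = v' @ [(e, False)])"

definition nf_path :: "(nat \<Rightarrow> nf) \<Rightarrow> nat \<Rightarrow> bool" where
  "nf_path P D \<longleftrightarrow> (\<forall>j<D. nf_edge (P j) (P (Suc j)))"

text \<open>A directed path from v to w first deletes r letters from the end of v and then only
  appends letters of type True, after which no deletion is possible any more.\<close>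

definition path_shape :: "nf \<Rightarrow> nf \<Rightarrow> nat \<Rightarrow> (nat \<Rightarrow> nf) \<Rightarrow> nat \<Rightarrow> bool" where
  "path_shape v w r P D \<longleftrightarrow> r \<le> D \<and> r \<le> length v \<and> length w = length v - r + (D - r) \<and>
     (\<forall>i. length v - r \<le> i \<and> i < length w \<longrightarrow> snd (w ! i)) \<and> P D = w \<and>
     (\<forall>j\<le>D. P j = (if j \<le> r then take (length v - j) v else take (length v - r + (j - r)) w))"

lemma path_shapeD:
  assumes "path_shape v w r P D"
  shows "r \<le> D" "r \<le> length v" "length w = length v - r + (D - r)"
    "\<And>i. length v - r \<le> i \<Longrightarrow> i < length w \<Longrightarrow> snd (w ! i)" "P D = w"
    "\<And>j. j \<le> D \<Longrightarrow> P j = (if j \<le> r then take (length v - j) v else take (length v - r + (j - r)) w)"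
  using assms unfolding path_shape_def by simp_all

lemma path_shape_append:
  assumes shape: "path_shape v w r P D" and step: "P (Suc D) = w @ [(e, True)]"
  shows "path_shape v (w @ [(e, True)]) r P (Suc D)"
proof -
  note S = path_shapeD[OF shape]
  have "P j = (if j \<le> r then take (length v - j) v else take (length v - r + (j - r)) (w @ [(e, True)]))"
    if "j \<le> Suc D" for j
  proof (cases "j = Suc D")
    case True
    then show ?thesis using S(1,3) step by simp
  next
    case False
    then show ?thesis using S(1,3) S(6)[of j] that by simp
  qed
  moreover have "snd ((w @ [(e, True)]) ! i)"
    if "length v - r \<le> i" "i < length (w @ [(e, True)])" for i
    using S(4)[of i] that by (cases "i < length w") (auto simp: nth_append)
  ultimately show ?thesis
    unfolding path_shape_def using S(1-3) step by auto
qed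

lemma path_shape_delete:
  assumes shape: "path_shape v w r P D" and w: "w = w' @ [(e, False)]" and step: "P (Suc D) = w'"
  shows "path_shape v w' (Suc D) P (Suc D)"
proof -
  note S = path_shapeD[OF shape]
  have "r = D"
  proof (rule ccontr)
    assume "r \<noteq> D"
    then have "snd (w ! (length w - 1))"
      using S(1,3) S(4)[of "length w - 1"] by linarith
    then show False using w by (simp add: nth_append)
  qed
  then have "w = take (length v - D) v" "D < length v"
    using S(3,5) S(6)[of D] w by auto
  moreover have "w' = butlast w"
    using w by simp
  ultimately have w': "w' = take (length v - Suc D) v"
    by (simp add: butlast_take)
  then have "P j = take (length v - j) v" if "j \<le> Suc D" for j
    using S(6)[of j] \<open>r = D\<close> step that by (cases "j = Suc D") auto
  then show ?thesis
    unfolding path_shape_def using \<open>D < length v\<close> w' step by auto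
qed

lemma nf_path_shape: "nf_path P D \<Longrightarrow> \<exists>r. path_shape (P 0) (P D) r P D"
proof (induction D)
  case 0
  show ?case by (rule exI[of _ 0]) (auto simp: path_shape_def)
next
  case (Suc D)
  then obtain r where "path_shape (P 0) (P D) r P D"
    by (auto simp: nf_path_def)
  moreover have "nf_edge (P D) (P (Suc D))"
    using Suc.prems by (simp add: nf_path_def)
  ultimately show ?case
    unfolding nf_edge_def using path_shape_append path_shape_delete by metis
qed

lemma nf_path_unique:
  assumes "nf_path P D" "nf_path Q D" "P 0 = Q 0" "P D = Q D" "j \<le> D"
  shows "P j = Q j"
proof -
  obtain r r' where r: "path_shape (P 0) (P D) r P D" and r': "path_shape (P 0) (P D) r' Q D"
    using nf_path_shape assms(1-4) by metis
  then have "r = r'"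
    using path_shapeD(1-3)[OF r] path_shapeD(1-3)[OF r'] by linarith
  then show ?thesis
    using path_shapeD(6)[OF r assms(5)] path_shapeD(6)[OF r' assms(5)] by simp
qed

lemma nf_path_append:
  assumes "nf_path P d" "nf_path Q e" "P d = Q 0"
  shows "nf_path (\<lambda>j. if j \<le> d then P j else Q (j - d)) (d + e)"
  unfolding nf_path_def
proof (intro allI impI)
  fix j assume "j < d + e"
  then consider "Suc j \<le> d" | "j = d" "0 < e" | "d < j" "j - d < e"
    by linarith
  then show "nf_edge (if j \<le> d then P j else Q (j - d)) (if Suc j \<le> d then P (Suc j) else Q (Suc j - d))"
    by cases (use assms in \<open>auto simp: nf_path_def Suc_diff_le\<close>)
qed

definition nf_height :: "nf \<Rightarrow> int" where
  "nf_height v = (\<Sum>x\<leftarrow>v. if snd x then 1 else -1)"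

lemma nf_edge_height: "nf_edge v v' \<Longrightarrow> nf_height v' = nf_height v + 1"
  by (auto simp: nf_edge_def nf_height_def)

lemma nf_path_height: "nf_path P D \<Longrightarrow> j \<le> D \<Longrightarrow> nf_height (P j) = nf_height (P 0) + int j"
proof (induction j)
  case (Suc j)
  then have "nf_edge (P j) (P (Suc j))" by (simp add: nf_path_def)
  then show ?case using Suc nf_edge_height by simp
qed simp

fun t_exp_letter :: "letter \<Rightarrow> int" where
  "t_exp_letter (GA, b) = 0"
| "t_exp_letter (GT, b) = (if b then -1 else 1)"

definition t_exp :: "word \<Rightarrow> int" where
  "t_exp w = (\<Sum>x\<leftarrow>w. t_exp_letter x)"

lemma t_exp_append: "t_exp (u @ w) = t_exp u + t_exp w"
  by (simp add: t_exp_def)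

lemma t_exp_gpow_t: "t_exp (gpow GT k) = k"
  by (auto simp: t_exp_def gpow_def sum_list_replicate)

context baumslag_solitar
begin

lemma nf_height_act: "normal v \<Longrightarrow> nf_height (act w v) = nf_height v + t_exp w"
proof (induction w)
  case (Cons x w)
  have "nf_height (act_a k v) = nf_height v" for k v
    by (induction v arbitrary: k) (auto simp: nf_height_def)
  moreover have "nf_height (act_t s (act w v)) = nf_height (act w v) + (if s then 1 else -1)" for s
    using normal_act[OF Cons.prems] by (cases "act w v") (auto simp: act_t_def nf_height_def)
  ultimately show ?case
    using Cons by (cases x rule: act_letter.cases) (auto simp: act_Cons t_exp_def)
qed (simp add: t_exp_def)

lemma nf_height_coset_nf_gpow_t:
  "nf_height (coset_nf (h @ gpow GT k)) = nf_height (coset_nf h) + k"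
  using nf_height_act[of "[]"] by (simp add: coset_nf_def nf_height_def t_exp_append t_exp_gpow_t)

lemma normal_snoc:
  "normal (v @ [(e, s)]) \<longleftrightarrow> normal v \<and> 0 \<le> e \<and> e < \<bar>den s\<bar> \<and> (v \<noteq> [] \<longrightarrow> snd (last v) = s \<or> e \<noteq> 0)"
proof (induction v rule: normal.induct)
  case (2 e' s' r)
  then show ?case by (cases r) auto
qed simp

lemma nf_edge_coset_nf_t: "nf_edge (coset_nf y) (coset_nf (y @ t_word))"
proof -
  let ?v = "coset_nf y"
  obtain i where i: "bs_eq m n y (nf_word ?v @ gpow GA i)"
    using bs_eq_nf_word_coset_nf by blast
  let ?e = "i mod \<bar>n\<bar>"
  have e: "0 \<le> ?e" "?e < \<bar>n\<bar>" using n_nonzero by auto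
  have "coset_nf (y @ t_word) = act y [(0, True)]"
    by (simp add: coset_nf_def act_append act_Cons act_t_def)
  also have "\<dots> = act (nf_word ?v @ gpow GA i) [(0, True)]"
    using abs_den_pos[of True] by (intro act_bs_eq[OF i]) simp
  also have "\<dots> = act (nf_word ?v) [(?e, True)]"
    using abs_den_pos[of True] by (simp add: act_append act_gpow_a den_def)
  finally have c: "coset_nf (y @ t_word) = act (nf_word ?v) [(?e, True)]" .
  show ?thesis
  proof (cases "normal (?v @ [(?e, True)])")
    case True
    then show ?thesis using c act_nf_word by (simp add: nf_edge_def)
  next
    case False
    then have "?v \<noteq> []" "snd (last ?v) = False" "?e = 0"
      using normal_coset_nf[of y] e normal_snoc[of ?v ?e True] by (auto simp: den_def)
    then obtain w x where w: "?v = w @ [(x, False)]"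
      by (metis append_butlast_last_id prod.collapse)
    then have "normal w" using normal_coset_nf[of y] normal_appendD by metis
    then have "act (nf_word ?v) [(?e, True)] = w"
      using w \<open>?e = 0\<close> act_nf_word[of w "[]"] act_a_0[of "[]"]
      by (simp add: nf_word_append act_append act_Cons act_t_def act_gpow_a)
    then show ?thesis using c w by (simp add: nf_edge_def)
  qed
qed

lemma Tedge_nf_edge: "Tedge m n l l' \<Longrightarrow> nf_edge (aline_nf l) (aline_nf l')"
proof -
  assume edge: "Tedge m n l l'"
  then obtain g g' where "l = line m n GA g" "l' = line m n GA g'"
    by (auto simp: Tedge_def alines_def)
  moreover obtain y where "bs_elem m n y \<in> l" "bs_elem m n (y @ t_word) \<in> l'"
    using edge by (auto simp: Tedge_def)
  ultimately show ?thesis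
    using nf_edge_coset_nf_t[of y] by (simp add: aline_nf_line bs_elem_mem_aline_iff)
qed

lemma Tless_nf_path:
  assumes "Tless m n u u'"
  obtains d P where "1 \<le> d" "nf_path P d" "P 0 = aline_nf u" "P d = aline_nf u'"
proof -
  obtain p where p: "Tgeodesic m n p u u'" and "u \<noteq> u'"
    and oriented: "\<And>i. Suc i < length p \<Longrightarrow> Tedge m n (p ! i) (p ! Suc i)"
    using assms by (auto simp: Tless_def Tle_def)
  then have "p \<noteq> []" "hd p = u" "last p = u'"
    by (auto simp: Tgeodesic_def Tpath_def)
  moreover have "length p \<noteq> 1"
  proof
    assume "length p = 1"
    then have "hd p = last p" by (cases p) auto
    with \<open>u \<noteq> u'\<close> \<open>hd p = u\<close> \<open>last p = u'\<close> show False by simp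
  qed
  ultimately have "1 \<le> length p - 1"
    by (cases p) (auto simp: Suc_le_eq)
  moreover have "nf_path (\<lambda>i. aline_nf (p ! i)) (length p - 1)"
    using oriented Tedge_nf_edge by (auto simp: nf_path_def)
  ultimately show ?thesis
    using that \<open>p \<noteq> []\<close> \<open>hd p = u\<close> \<open>last p = u'\<close> by (simp add: hd_conv_nth last_conv_nth)
qed

lemma Tless_Tless_nf_path:
  assumes "Tless m n u1 u2" "Tless m n u2 u3"
  obtains Q D d where "nf_path Q D" "1 \<le> d" "d < D"
    "Q 0 = aline_nf u1" "Q d = aline_nf u2" "Q D = aline_nf u3"
proof -
  obtain d P where P: "1 \<le> d" "nf_path P d" "P 0 = aline_nf u1" "P d = aline_nf u2"
    using Tless_nf_path[OF assms(1)] by blast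
  obtain e P' where P': "1 \<le> e" "nf_path P' e" "P' 0 = aline_nf u2" "P' e = aline_nf u3"
    using Tless_nf_path[OF assms(2)] by blast
  show ?thesis
    using that[OF nf_path_append[OF P(2) P'(2)], of d] P P' by auto
qed

lemma nf_path_tline: "nf_path (\<lambda>j. coset_nf (x @ gpow GT (int j))) D"
  unfolding nf_path_def
proof (intro allI impI)
  fix j
  have "gpow GT (int (Suc j)) = gpow GT (int j) @ t_word"
    by (simp add: gpow_def replicate_append_same del: of_nat_Suc)
  then show "nf_edge (coset_nf (x @ gpow GT (int j))) (coset_nf (x @ gpow GT (int (Suc j))))"
    using nf_edge_coset_nf_t[of "x @ gpow GT (int j)"] by simp
qed

section \<open>Elements of \<open>\<langle>a\<rangle>\<close> fixing a ray of \<open>t\<close>-edges\<close>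

definition ray :: "bool \<Rightarrow> nat \<Rightarrow> word" where
  "ray s j = gpow GT (if s then int j else - int j)"

definition a_pow_fixes_ray :: "bool \<Rightarrow> nat \<Rightarrow> int \<Rightarrow> bool" where
  "a_pow_fixes_ray s j k \<longleftrightarrow> act_a k (replicate j (0, s)) = replicate j (0, s)"

lemma normal_replicate: "normal (replicate j (0, s))"
proof (induction j)
  case (Suc j)
  then show ?case using abs_den_pos[of s] by (cases j) auto
qed simp

lemma coset_nf_ray: "coset_nf (ray s j) = replicate j (0, s)"
proof -
  have "act (replicate j (GT, \<not> s)) [] = replicate j (0, s)"
    by (induction j) (auto simp: act_Cons act_t_def)
  then show ?thesis
    by (cases "j = 0") (auto simp: coset_nf_def ray_def gpow_def)
qed

lemma coset_nf_a_pow_ray_iff: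
  "coset_nf (x @ gpow GA k @ ray s j) = coset_nf (x @ ray s j) \<longleftrightarrow> a_pow_fixes_ray s j k"
  using coset_nf_prefix_eq_iff[of x "gpow GA k @ ray s j" "ray s j"]
  by (simp add: coset_nf_append act_gpow_a[OF normal_replicate] coset_nf_ray a_pow_fixes_ray_def)

lemma a_pow_fixes_ray_0 [simp]: "a_pow_fixes_ray s 0 k"
  by (simp add: a_pow_fixes_ray_def)

lemma a_pow_fixes_ray_Suc:
  "a_pow_fixes_ray s (Suc j) k \<longleftrightarrow> (\<exists>q. k = den s * q \<and> a_pow_fixes_ray s j (q * num s))"
proof -
  have "a_pow_fixes_ray s (Suc j) k \<longleftrightarrow>
      den s dvd k \<and> a_pow_fixes_ray s j (k div \<bar>den s\<bar> * (sgn (den s) * num s))"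
    by (simp add: a_pow_fixes_ray_def dvd_eq_mod_eq_0[symmetric])
  also have "\<dots> \<longleftrightarrow> (\<exists>q. k = den s * q \<and> a_pow_fixes_ray s j (q * num s))"
    using mult_div_abs_mult_sgn[OF den_nonzero, of s] by (auto simp: mult.assoc[symmetric] elim!: dvdE)
  finally show ?thesis .
qed

lemma a_pow_fixes_ray_mult: "a_pow_fixes_ray s j k \<Longrightarrow> a_pow_fixes_ray s j (k * c)"
proof (induction j arbitrary: k)
  case (Suc j)
  then obtain q where "k = den s * q" "a_pow_fixes_ray s j (q * num s)"
    by (auto simp: a_pow_fixes_ray_Suc)
  then show ?case
    using Suc.IH[of "q * num s"] by (auto simp: a_pow_fixes_ray_Suc mult_ac intro!: exI[of _ "q * c"])
qed simp

lemma a_pow_fixes_ray_den_pow: "a_pow_fixes_ray s j (den s ^ j)"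
proof (induction j)
  case (Suc j)
  then show ?case
    using a_pow_fixes_ray_mult[of s j "den s ^ j" "num s"] by (auto simp: a_pow_fixes_ray_Suc)
qed simp

text \<open>If every a^k fixing j edges of the ray also fixed j + 1 of them, one could start from
  k = den^j and forever divide by den and multiply by num, so den^i would divide den^j num^i
  for all i.\<close>

lemma a_pow_fixes_ray_strict:
  assumes "\<not> den s dvd num s"
  shows "\<exists>k. a_pow_fixes_ray s j k \<and> \<not> a_pow_fixes_ray s (Suc j) k"
proof (rule ccontr)
  assume "\<not> ?thesis"
  then have step: "a_pow_fixes_ray s j k \<Longrightarrow> a_pow_fixes_ray s (Suc j) k" for k by blast
  have "\<exists>z. a_pow_fixes_ray s j z \<and> z * den s ^ i = den s ^ j * num s ^ i" for i
  proof (induction i)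
    case 0
    show ?case using a_pow_fixes_ray_den_pow by auto
  next
    case (Suc i)
    then obtain z where z: "a_pow_fixes_ray s j z" "z * den s ^ i = den s ^ j * num s ^ i"
      by blast
    then obtain q where "z = den s * q" "a_pow_fixes_ray s j (q * num s)"
      using step a_pow_fixes_ray_Suc by blast
    moreover have "(q * num s) * den s ^ Suc i = den s ^ j * num s ^ Suc i"
      using z(2) \<open>z = den s * q\<close> by (simp add: mult_ac)
    ultimately show ?case by blast
  qed
  then have "den s ^ i dvd den s ^ j * num s ^ i" for i
    by (metis dvd_triv_right)
  then show False
    using ex_pow_not_dvd_mult_pow[OF den_nonzero assms, of "den s ^ j"] den_nonzero by simp
qed

lemma a_pow_fixes_ray_if_dvd: "den s dvd num s \<Longrightarrow> den s dvd k \<Longrightarrow> a_pow_fixes_ray s j k"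
proof (induction j arbitrary: k)
  case (Suc j)
  then obtain q where "k = den s * q" by blast
  moreover have "den s dvd q * num s" using Suc.prems(1) by simp
  ultimately show ?case using Suc by (auto simp: a_pow_fixes_ray_Suc)
qed simp

section \<open>\<open>t\<close>-lines through a directed path\<close>

lemma tline_height_shift:
  "coset_nf (h @ gpow GT k) = v \<Longrightarrow> coset_nf (h @ gpow GT k') = v' \<Longrightarrow> k' - k = nf_height v' - nf_height v"
  using nf_height_coset_nf_gpow_t[of h k] nf_height_coset_nf_gpow_t[of h k'] by auto

text \<open>A t-line meeting both ends of a directed path runs along the whole path, because a
  directed path is determined by its ends and its length.\<close>

lemma tline_follows_path:
  assumes Q: "nf_path Q D" and start: "coset_nf (h @ gpow GT k) = Q 0"
    and "tline_meets h (Q D)" and "j \<le> D"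
  shows "coset_nf (h @ gpow GT (k + int j)) = Q j"
proof -
  obtain k' where k': "coset_nf (h @ gpow GT k') = Q D"
    using assms(3) by (auto simp: tline_meets_def)
  then have "k' = k + int D"
    using tline_height_shift[OF start k'] nf_path_height[OF Q, of D] by simp
  then have "coset_nf ((h @ gpow GT k) @ gpow GT (int D)) = Q D"
    using k' by (simp add: coset_nf_gpow_add)
  then have "coset_nf ((h @ gpow GT k) @ gpow GT (int j)) = Q j"
    using nf_path_unique[OF nf_path_tline Q, of "h @ gpow GT k" j] start \<open>j \<le> D\<close> by simp
  then show ?thesis
    by (simp add: coset_nf_gpow_add)
qed

lemma tline_meets_line_cong:
  assumes "line m n GT h = line m n GT h'"
  shows "tline_meets h v \<longleftrightarrow> tline_meets h' v"
proof -
  have "tline_meets h v" if lines: "line m n GT h = line m n GT h'" and meets: "tline_meets h' v" for h h'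
  proof -
    have "bs_elem m n (h' @ gpow GT 0) \<in> line m n GT h'"
      unfolding line_def by blast
    then have "bs_elem m n h' \<in> line m n GT h"
      using lines by simp
    then obtain k where k: "bs_eq m n h' (h @ gpow GT k)"
      by (auto simp: line_def bs_elem_eq_iff)
    obtain j where j: "coset_nf (h' @ gpow GT j) = v"
      using meets by (auto simp: tline_meets_def)
    have "coset_nf (h' @ gpow GT j) = coset_nf ((h @ gpow GT k) @ gpow GT j)"
      using bs_eq_suffix[OF k] by (rule coset_nf_bs_eq)
    then have "coset_nf (h @ gpow GT (k + j)) = v"
      using j by (simp add: coset_nf_gpow_add)
    then show ?thesis
      unfolding tline_meets_def by blast
  qed
  from this[OF assms] this[OF assms[symmetric]] show ?thesis
    by blast
qed

lemma VT_line_mem_tline_vertices: "VT (line m n GT h) \<in> tline_vertices v \<longleftrightarrow> tline_meets h v"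
proof
  assume "VT (line m n GT h) \<in> tline_vertices v"
  then obtain h' where "line m n GT h = line m n GT h'" "tline_meets h' v"
    by (auto simp: tline_vertices_def)
  then show "tline_meets h v"
    using tline_meets_line_cong by blast
qed (auto simp: tline_vertices_def)

lemma tline_meets_between:
  assumes "nf_path Q D" "d \<le> D" "tline_meets h (Q 0)" "tline_meets h (Q D)"
  shows "tline_meets h (Q d)"
proof -
  obtain k where "coset_nf (h @ gpow GT k) = Q 0"
    using assms(3) by (auto simp: tline_meets_def)
  then show ?thesis
    using tline_follows_path[OF assms(1) _ assms(4,2)] by (auto simp: tline_meets_def)
qed

lemma tline_branching_forward:
  assumes Q: "nf_path Q D" and "d < D" and "\<not> n dvd m"
    and "tline_meets h (Q 0)" "tline_meets h (Q D)"
  shows "\<exists>x. tline_meets x (Q 0) \<and> tline_meets x (Q d) \<and> \<not> tline_meets x (Q D)"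
proof -
  obtain k where k: "coset_nf (h @ gpow GT k) = Q 0"
    using assms(4) by (auto simp: tline_meets_def)
  define x0 where "x0 = h @ gpow GT k"
  have x0: "coset_nf (x0 @ ray True j) = Q j" if "j \<le> D" for j
    using tline_follows_path[OF Q k assms(5) that] by (simp add: x0_def ray_def coset_nf_gpow_add)
  obtain c where c: "a_pow_fixes_ray True d c" "\<not> a_pow_fixes_ray True (Suc d) c"
    using a_pow_fixes_ray_strict[of True] assms(3) by (auto simp: den_def num_def)
  define x where "x = x0 @ gpow GA c"
  have x: "coset_nf (x @ ray True j) = Q j \<longleftrightarrow> a_pow_fixes_ray True j c" if "j \<le> D" for j
    using coset_nf_a_pow_ray_iff[of x0 c True j] x0[OF that] by (simp add: x_def)
  have "coset_nf (x @ gpow GT 0) = Q 0" "coset_nf (x @ gpow GT (int d)) = Q d"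
    using x[of 0] x[of d] c(1) \<open>d < D\<close> by (simp_all add: ray_def)
  moreover have "\<not> tline_meets x (Q D)"
  proof
    assume "tline_meets x (Q D)"
    then have "coset_nf (x @ gpow GT (int (Suc d))) = Q (Suc d)"
      using tline_follows_path[OF Q \<open>coset_nf (x @ gpow GT 0) = Q 0\<close>, of "Suc d"] \<open>d < D\<close> by simp
    then show False
      using x[of "Suc d"] c(2) \<open>d < D\<close> by (simp add: ray_def)
  qed
  ultimately show ?thesis
    unfolding tline_meets_def by blast
qed

lemma tline_branching_backward:
  assumes Q: "nf_path Q D" and "0 < d" "d \<le> D" and "\<not> m dvd n"
    and "tline_meets h (Q 0)" "tline_meets h (Q D)"
  shows "\<exists>x. tline_meets x (Q d) \<and> tline_meets x (Q D) \<and> \<not> tline_meets x (Q 0)"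
proof -
  obtain k where k: "coset_nf (h @ gpow GT k) = Q 0"
    using assms(5) by (auto simp: tline_meets_def)
  define y0 where "y0 = h @ gpow GT (k + int D)"
  have y0: "coset_nf (y0 @ ray False j) = Q (D - j)" if "j \<le> D" for j
    using tline_follows_path[OF Q k assms(6), of "D - j"] that
    by (simp add: y0_def ray_def coset_nf_gpow_add of_nat_diff algebra_simps)
  define E where "E = D - d"
  obtain c where c: "a_pow_fixes_ray False E c" "\<not> a_pow_fixes_ray False (Suc E) c"
    using a_pow_fixes_ray_strict[of False] assms(4) by (auto simp: den_def num_def)
  define x where "x = y0 @ gpow GA c"
  have x: "coset_nf (x @ ray False j) = Q (D - j) \<longleftrightarrow> a_pow_fixes_ray False j c" if "j \<le> D" for j
    using coset_nf_a_pow_ray_iff[of y0 c False j] y0[OF that] by (simp add: x_def)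
  have "coset_nf (x @ gpow GT 0) = Q D" "coset_nf (x @ gpow GT (- int E)) = Q d"
    using x[of 0] x[of E] c(1) assms(3) by (simp_all add: ray_def E_def)
  moreover have "\<not> tline_meets x (Q 0)"
  proof
    assume "tline_meets x (Q 0)"
    then obtain k' where k': "coset_nf (x @ gpow GT k') = Q 0"
      by (auto simp: tline_meets_def)
    have "tline_meets x (Q D)"
      using \<open>coset_nf (x @ gpow GT 0) = Q D\<close> unfolding tline_meets_def by blast
    then have "coset_nf (x @ gpow GT (k' + int (d - 1))) = Q (d - 1)"
      using tline_follows_path[OF Q k'] assms(3) by simp
    moreover have "k' = - int D"
      using tline_height_shift[OF k' \<open>coset_nf (x @ gpow GT 0) = Q D\<close>] nf_path_height[OF Q, of D]
      by simp
    then have "k' + int (d - 1) = - int (Suc E)" "d - 1 = D - Suc E"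
      using assms(2,3) by (simp_all add: E_def)
    ultimately have "coset_nf (x @ gpow GT (- int (Suc E))) = Q (D - Suc E)"
      by simp
    then show False
      using x[of "Suc E"] c(2) assms(2,3) by (simp add: ray_def E_def)
  qed
  ultimately show ?thesis
    unfolding tline_meets_def by blast
qed

text \<open>If m divides n, an a^c fixing a forward t-edge is a multiple of n, hence of m, and then
  it fixes every backward ray.\<close>

lemma tline_meets_start_if_dvd:
  assumes Q: "nf_path Q D" and "d < D" and "m dvd n"
    and "tline_meets h0 (Q 0)" "tline_meets h0 (Q D)"
    and "tline_meets h (Q d)" "tline_meets h (Q D)"
  shows "tline_meets h (Q 0)"
proof -
  obtain k0 where k0: "coset_nf (h0 @ gpow GT k0) = Q 0"
    using assms(4) by (auto simp: tline_meets_def)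
  define z0 where "z0 = h0 @ gpow GT (k0 + int d)"
  have z0: "coset_nf z0 = Q d" "coset_nf (z0 @ ray True (D - d)) = Q D" "coset_nf (z0 @ ray False d) = Q 0"
    using tline_follows_path[OF Q k0 assms(5), of d] tline_follows_path[OF Q k0 assms(5), of D]
      tline_follows_path[OF Q k0 assms(5), of 0] \<open>d < D\<close>
    by (simp_all add: z0_def ray_def coset_nf_gpow_add of_nat_diff)
  obtain k where k: "coset_nf (h @ gpow GT k) = Q d"
    using assms(6) by (auto simp: tline_meets_def)
  define z where "z = h @ gpow GT k"
  obtain k' where k': "coset_nf (h @ gpow GT k') = Q D"
    using assms(7) by (auto simp: tline_meets_def)
  have "k' = k + int (D - d)"
    using tline_height_shift[OF k k'] nf_path_height[OF Q, of d] nf_path_height[OF Q, of D] \<open>d < D\<close>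
    by simp
  then have "coset_nf (z @ ray True (D - d)) = Q D"
    using k' by (simp add: z_def ray_def coset_nf_gpow_add)
  obtain c where c: "bs_eq m n z (z0 @ gpow GA c)"
    using coset_nf_eq_iff[of z z0] k z0(1) by (auto simp: z_def)
  then have coset_z: "coset_nf (z @ w) = coset_nf (z0 @ gpow GA c @ w)" for w
    using coset_nf_bs_eq[OF bs_eq_suffix[OF c]] by simp
  have "a_pow_fixes_ray True (D - d) c"
    using coset_nf_a_pow_ray_iff[of z0 c True "D - d"] coset_z z0(2) \<open>coset_nf (z @ ray True (D - d)) = Q D\<close>
    by simp
  then have "n dvd c"
    using \<open>d < D\<close> by (cases "D - d") (auto simp: a_pow_fixes_ray_Suc den_def)
  then have "a_pow_fixes_ray False d c"
    using a_pow_fixes_ray_if_dvd[of False c d] assms(3) dvd_trans by (auto simp: den_def num_def)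
  have "coset_nf (h @ gpow GT (k - int d)) = coset_nf (z @ ray False d)"
    by (simp add: z_def ray_def coset_nf_gpow_add)
  also have "\<dots> = coset_nf (z0 @ gpow GA c @ ray False d)"
    by (rule coset_z)
  also have "\<dots> = Q 0"
    using coset_nf_a_pow_ray_iff[of z0 c False d] \<open>a_pow_fixes_ray False d c\<close> z0(3) by simp
  finally show ?thesis
    unfolding tline_meets_def by blast
qed

lemma tline_vertices_inter_subset:
  assumes "\<And>h. tline_meets h u \<Longrightarrow> tline_meets h v \<Longrightarrow> tline_meets h w"
  shows "tline_vertices u \<inter> tline_vertices v \<subseteq> tline_vertices w"
proof
  fix y assume y: "y \<in> tline_vertices u \<inter> tline_vertices v"
  then obtain h where "y = VT (line m n GT h)"
    by (auto simp: tline_vertices_def)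
  with y show "y \<in> tline_vertices w"
    using assms by (simp add: VT_line_mem_tline_vertices)
qed

lemma tline_vertices_inter_not_subset:
  assumes "tline_meets x u" "tline_meets x v" "\<not> tline_meets x w"
  shows "\<not> tline_vertices u \<inter> tline_vertices v \<subseteq> tline_vertices w"
proof -
  have "VT (line m n GT x) \<in> tline_vertices u \<inter> tline_vertices v - tline_vertices w"
    using assms by (simp add: VT_line_mem_tline_vertices)
  then show ?thesis by blast
qed

lemma tline_vertices_inter_nonempty:
  assumes "tline_vertices u \<inter> tline_vertices v \<noteq> {}"
  obtains h where "tline_meets h u" "tline_meets h v"
proof -
  obtain h where "VT (line m n GT h) \<in> tline_vertices u \<inter> tline_vertices v"
    using assms by (auto simp: tline_vertices_def)
  then show ?thesis
    using that by (auto simp: VT_line_mem_tline_vertices)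
qed

lemma tline_vertices_along_path:
  assumes Q: "nf_path Q D" and d: "0 < d" "d < D" and "\<not> n dvd m"
    and "tline_vertices (Q 0) \<inter> tline_vertices (Q D) \<noteq> {}"
  defines "L j \<equiv> tline_vertices (Q j)"
  shows "L 0 \<inter> L D \<subset> L 0 \<inter> L d \<and> L 0 \<inter> L D \<subseteq> L d \<inter> L D
    \<and> (\<not> m dvd n \<longrightarrow> L 0 \<inter> L D \<subset> L d \<inter> L D) \<and> (m dvd n \<longrightarrow> L 0 \<inter> L D = L d \<inter> L D)"
proof -
  obtain h0 where h0: "tline_meets h0 (Q 0)" "tline_meets h0 (Q D)"
    using tline_vertices_inter_nonempty[OF assms(5)] by blast
  have "L 0 \<inter> L D \<subseteq> L d"
    unfolding L_def by (intro tline_vertices_inter_subset tline_meets_between[OF Q less_imp_le[OF d(2)]])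
  moreover have "\<not> L 0 \<inter> L d \<subseteq> L D"
    using tline_branching_forward[OF Q d(2) assms(4) h0] tline_vertices_inter_not_subset
    unfolding L_def by blast
  moreover have "\<not> L d \<inter> L D \<subseteq> L 0" if "\<not> m dvd n"
    using tline_branching_backward[OF Q d(1) less_imp_le[OF d(2)] that h0] tline_vertices_inter_not_subset
    unfolding L_def by blast
  moreover have "L d \<inter> L D \<subseteq> L 0" if "m dvd n"
    unfolding L_def by (intro tline_vertices_inter_subset tline_meets_start_if_dvd[OF Q d(2) that h0])
  ultimately show ?thesis
    by blast
qed

end

theorem corollary3p7:
  fixes m n :: int and u1 u2 u3 :: "word set set"
  assumes "m \<noteq> 0" and "n \<noteq> 0" and "\<bar>m\<bar> < \<bar>n\<bar>"
    and "u1 \<in> alines m n" and "u2 \<in> alines m n" and "u3 \<in> alines m n"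
    and "Tless m n u1 u2" and "Tless m n u2 u3"
    and "Llink m n (VA u1) \<inter> Llink m n (VA u3) \<noteq> {}"
  shows "Llink m n (VA u1) \<inter> Llink m n (VA u3) \<subset> Llink m n (VA u1) \<inter> Llink m n (VA u2)
    \<and> Llink m n (VA u1) \<inter> Llink m n (VA u3) \<subseteq> Llink m n (VA u2) \<inter> Llink m n (VA u3)
    \<and> (\<not> m dvd n \<longrightarrow> Llink m n (VA u1) \<inter> Llink m n (VA u3) \<subset> Llink m n (VA u2) \<inter> Llink m n (VA u3))
    \<and> (m dvd n \<longrightarrow> Llink m n (VA u1) \<inter> Llink m n (VA u3) = Llink m n (VA u2) \<inter> Llink m n (VA u3))"
proof -
  interpret baumslag_solitar m n
    using assms(1,2) by unfold_locales
  obtain Q D d where Q: "nf_path Q D" and d: "1 \<le> d" "d < D"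
    and ends: "Q 0 = aline_nf u1" "Q d = aline_nf u2" "Q D = aline_nf u3"
    using Tless_Tless_nf_path[OF assms(7,8)] by blast
  have links: "Llink m n (VA u1) = tline_vertices (Q 0)" "Llink m n (VA u2) = tline_vertices (Q d)"
    "Llink m n (VA u3) = tline_vertices (Q D)"
    using Llink_VA assms(4-6) by (simp_all add: ends)
  have "\<not> n dvd m"
    using assms(1,3) by (auto dest: dvd_imp_le_int)
  then show ?thesis
    using tline_vertices_along_path[OF Q _ d(2)] assms(9) d(1) unfolding links by simp
qed

end
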